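(* If $\deg(e)\ge 3$ (where $e$ is the base of the natural logarithm, and $\deg(e)=\infty$ is allowed), then $e+\pi$ is a transcendental number.
   Context: Let $\overline{\mathbb{Q}}$ denote the field of algebraic numbers. For $n\ge 1$, an admissible domain in $\mathbb{R}^n$ is a subset of $\mathbb{R}^n$ which is a finite union of sets of the form $\{x\in\mathbb{R}^n : P_1(x)\,\square_1\, 0,\dots,P_r(x)\,\square_r\, 0\}$, where each $P_i$ is a polynomial with real algebraic coefficients and each $\square_i\in\{\ge,>\}$, and which has finite Lebesgue measure $\mathrm{vol}_n$. A real number $p$ is a real period if $p=\mathrm{vol}_n(\Sigma_1)-\mathrm{vol}_n(\Sigma_2)$ for some $n\ge1$ and admissible domains $\Sigma_1,\Sigma_2\subseteq\mathbb{R}^n$. The degree is defined as follows: $\deg(0)=0$; for a nonzero real period $p$, $\deg(p)$ is the least $n\ge 1$ such that $p=\mathrm{vol}_n(\Sigma_1)-\mathrm{vol}_n(\Sigma_2)$ with $\Sigma_1,\Sigma_2$ admissible domains in $\mathbb{R}^n$; for a real number that is not a period, $\deg(p)=\infty$, with $\infty$ larger than every integer. *)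

theory Defs
  imports "HOL-Analysis.Analysis" "HOL-Computational_Algebra.Polynomial"
begin

text \<open>Points of R^n are represented as extensional functions nat => real on {..<n};
  Lebesgue measure on R^n is the n-fold product of lborel.\<close>

definition Rn_measure :: "nat \<Rightarrow> (nat \<Rightarrow> real) measure" where
  "Rn_measure n = PiM {..<n} (\<lambda>_. lborel)"

definition alg_poly_fun :: "nat \<Rightarrow> ((nat \<Rightarrow> real) \<Rightarrow> real) \<Rightarrow> bool" where
  "alg_poly_fun n P \<longleftrightarrow>
     (\<exists>c :: (nat \<Rightarrow> nat) \<Rightarrow> real.
        finite {\<alpha>. c \<alpha> \<noteq> 0} \<and> (\<forall>\<alpha>. algebraic (c \<alpha>)) \<and>
        (\<forall>x. P x = (\<Sum>\<alpha>\<in>{\<alpha>. c \<alpha> \<noteq> 0}. c \<alpha> * (\<Prod>i<n. x i ^ \<alpha> i))))"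

definition basic_set :: "nat \<Rightarrow> (((nat \<Rightarrow> real) \<Rightarrow> real) \<times> bool) list \<Rightarrow> (nat \<Rightarrow> real) set" where
  "basic_set n L = {x \<in> space (Rn_measure n).
      \<forall>(P, strict) \<in> set L. (if strict then P x > 0 else P x \<ge> 0)}"

definition admissible_domain :: "nat \<Rightarrow> (nat \<Rightarrow> real) set \<Rightarrow> bool" where
  "admissible_domain n \<Sigma> \<longleftrightarrow>
     (\<exists>Ls :: (((nat \<Rightarrow> real) \<Rightarrow> real) \<times> bool) list set.
        finite Ls \<and> (\<forall>L\<in>Ls. \<forall>(P, _) \<in> set L. alg_poly_fun n P) \<and>
        \<Sigma> = (\<Union>L\<in>Ls. basic_set n L)) \<and>
     \<Sigma> \<in> sets (Rn_measure n) \<and> emeasure (Rn_measure n) \<Sigma> < \<infinity>"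

definition period_in_dim :: "nat \<Rightarrow> real \<Rightarrow> bool" where
  "period_in_dim n p \<longleftrightarrow> (\<exists>\<Sigma>1 \<Sigma>2. admissible_domain n \<Sigma>1 \<and> admissible_domain n \<Sigma>2 \<and>
      p = measure (Rn_measure n) \<Sigma>1 - measure (Rn_measure n) \<Sigma>2)"

definition real_period :: "real \<Rightarrow> bool" where
  "real_period p \<longleftrightarrow> (\<exists>n\<ge>1. period_in_dim n p)"

definition period_degree :: "real \<Rightarrow> enat" where
  "period_degree p =
     (if p = 0 then 0
      else if real_period p then enat (LEAST n. n \<ge> 1 \<and> period_in_dim n p)
      else \<infinity>)"

end

theory Submission
  imports Defs
begin

(* Idea: if e + pi were algebraic, then e would be the difference of two volumes of
   admissible domains in the plane, namely
     e = area ([0, e + pi] \<times> [0, 1]) - area (closed unit disk),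
   so e would be a period of degree at most 2, contradicting deg(e) \<ge> 3. *)

text \<open>A function given as a finite sum of monomials with algebraic coefficients is an
  algebraic polynomial function; the index set need not be the exact support.\<close>

lemma alg_poly_funI:
  assumes "finite T" "\<And>\<alpha>. \<alpha> \<in> T \<Longrightarrow> algebraic (c \<alpha>)"
    and "\<And>x. P x = (\<Sum>\<alpha>\<in>T. c \<alpha> * (\<Prod>i<n. x i ^ \<alpha> i))"
  shows "alg_poly_fun n P"
proof -
  define c' where "c' \<alpha> = (if \<alpha> \<in> T then c \<alpha> else 0)" for \<alpha>
  have support: "{\<alpha>. c' \<alpha> \<noteq> 0} \<subseteq> T" by (auto simp: c'_def)
  have "P x = (\<Sum>\<alpha>\<in>{\<alpha>. c' \<alpha> \<noteq> 0}. c' \<alpha> * (\<Prod>i<n. x i ^ \<alpha> i))" for x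
  proof -
    have "(\<Sum>\<alpha>\<in>{\<alpha>. c' \<alpha> \<noteq> 0}. c' \<alpha> * (\<Prod>i<n. x i ^ \<alpha> i))
        = (\<Sum>\<alpha>\<in>T. c' \<alpha> * (\<Prod>i<n. x i ^ \<alpha> i))"
      by (rule sum.mono_neutral_left[OF assms(1) support]) auto
    also have "\<dots> = (\<Sum>\<alpha>\<in>T. c \<alpha> * (\<Prod>i<n. x i ^ \<alpha> i))"
      by (rule sum.cong) (auto simp: c'_def)
    finally show ?thesis using assms(3) by simp
  qed
  moreover have "finite {\<alpha>. c' \<alpha> \<noteq> 0}" using support assms(1) finite_subset by blast
  moreover have "algebraic (c' \<alpha>)" for \<alpha> using assms(2) by (auto simp: c'_def)
  ultimately show ?thesis unfolding alg_poly_fun_def by blast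
qed

definition single_exp :: "nat \<Rightarrow> nat \<Rightarrow> nat \<Rightarrow> nat" where
  "single_exp i k = (\<lambda>j. if j = i then k else 0)"

lemma prod_single_exp:
  assumes "i < n"
  shows "(\<Prod>j<n. x j ^ single_exp i k j) = (x i :: real) ^ k"
proof -
  have "(\<Prod>j<n. x j ^ single_exp i k j) = (\<Prod>j<n. if j = i then x i ^ k else 1)"
    by (rule prod.cong) (auto simp: single_exp_def)
  then show ?thesis using assms by simp
qed

lemma single_exp_eq_zero_iff [simp]: "single_exp i k = (\<lambda>_. 0) \<longleftrightarrow> k = 0"
  by (auto simp: single_exp_def fun_eq_iff)

lemma inj_single_exp: "k > 0 \<Longrightarrow> inj (\<lambda>i. single_exp i k)"
  by (auto simp: inj_def single_exp_def fun_eq_iff split: if_splits)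

lemma algebraic_one: "algebraic (1 :: real)"
  and algebraic_minus_one: "algebraic (-1 :: real)"
  by (simp_all add: rat_imp_algebraic)

lemma alg_poly_coordinate:
  assumes "i < n"
  shows "alg_poly_fun n (\<lambda>x. x i)"
  by (rule alg_poly_funI[where T = "{single_exp i 1}" and c = "\<lambda>_. 1"])
     (simp_all add: prod_single_exp[OF assms] algebraic_one)

lemma alg_poly_const_minus_coordinate:
  assumes "algebraic b" "i < n"
  shows "alg_poly_fun n (\<lambda>x. b - x i)"
  by (rule alg_poly_funI[where T = "{single_exp i 1, \<lambda>_. 0}" and c = "\<lambda>\<alpha>. if \<alpha> = (\<lambda>_. 0) then b else -1"])
     (simp_all add: assms(1) prod_single_exp[OF assms(2)] algebraic_minus_one)

lemma alg_poly_ball: "alg_poly_fun n (\<lambda>x. 1 - (\<Sum>i<n. x i ^ 2))"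
proof (rule alg_poly_funI[where T = "insert (\<lambda>_. 0) ((\<lambda>i. single_exp i 2) ` {..<n})"
      and c = "\<lambda>\<alpha>. if \<alpha> = (\<lambda>_. 0) then 1 else -1"])
  fix x :: "nat \<Rightarrow> real"
  let ?m = "\<lambda>\<alpha>. (if \<alpha> = (\<lambda>_. 0) then 1 else -1) * (\<Prod>j<n. x j ^ \<alpha> j)"
  have "(\<lambda>_. 0) \<notin> (\<lambda>i. single_exp i 2) ` {..<n}"
  proof
    assume "(\<lambda>_. 0) \<in> (\<lambda>i. single_exp i 2) ` {..<n}"
    then obtain i where "(\<lambda>_. 0) = single_exp i 2" by blast
    from this[symmetric] show False by simp
  qed
  then have "sum ?m (insert (\<lambda>_. 0) ((\<lambda>i. single_exp i 2) ` {..<n}))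
      = 1 + sum ?m ((\<lambda>i. single_exp i 2) ` {..<n})"
    by simp
  also have "sum ?m ((\<lambda>i. single_exp i 2) ` {..<n}) = (\<Sum>i<n. ?m (single_exp i 2))"
    by (rule sum.reindex_cong[OF inj_on_subset[OF inj_single_exp subset_UNIV]]) auto
  also have "\<dots> = (\<Sum>i<n. - (x i ^ 2))"
    by (rule sum.cong) (simp_all add: prod_single_exp)
  finally show "1 - (\<Sum>i<n. x i ^ 2) = sum ?m (insert (\<lambda>_. 0) ((\<lambda>i. single_exp i 2) ` {..<n}))"
    by (simp add: sum_negf)
qed (auto simp: algebraic_one algebraic_minus_one)

lemma alg_poly_fun_measurable:
  assumes "alg_poly_fun n P"
  shows "P \<in> borel_measurable (Rn_measure n)"
proof -
  obtain c where P: "\<And>x. P x = (\<Sum>\<alpha>\<in>{\<alpha>. c \<alpha> \<noteq> 0}. c \<alpha> * (\<Prod>i<n. x i ^ \<alpha> i))"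
    using assms unfolding alg_poly_fun_def by blast
  have coordinate: "(\<lambda>x. x i) \<in> borel_measurable (Rn_measure n)" if "i \<in> {..<n}" for i
    using measurable_component_singleton[OF that, of "\<lambda>_. lborel"] by (simp add: Rn_measure_def)
  have "(\<lambda>x. \<Sum>\<alpha>\<in>{\<alpha>. c \<alpha> \<noteq> 0}. c \<alpha> * (\<Prod>i<n. x i ^ \<alpha> i)) \<in> borel_measurable (Rn_measure n)"
    by (intro borel_measurable_sum borel_measurable_times borel_measurable_const
        borel_measurable_prod borel_measurable_power coordinate)
  then show ?thesis by (simp add: P[abs_def])
qed

lemma sets_basic_set:
  assumes "\<forall>(P, _) \<in> set L. alg_poly_fun n P"
  shows "basic_set n L \<in> sets (Rn_measure n)"
  using assms
proof (induction L)
  case Nil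
  then show ?case by (simp add: basic_set_def)
next
  case (Cons C L)
  obtain P strict where C: "C = (P, strict)" by fastforce
  then have [measurable]: "P \<in> borel_measurable (Rn_measure n)"
    using Cons.prems by (simp add: alg_poly_fun_measurable)
  have "basic_set n (C # L)
      = {x \<in> space (Rn_measure n). if strict then P x > 0 else P x \<ge> 0} \<inter> basic_set n L"
    by (auto simp: basic_set_def C)
  moreover have "{x \<in> space (Rn_measure n). if strict then P x > 0 else P x \<ge> 0} \<in> sets (Rn_measure n)"
    by (cases strict) simp_all
  ultimately show ?case using Cons by auto
qed

lemma admissible_basic_set:
  assumes "\<forall>(P, _) \<in> set L. alg_poly_fun n P"
    and "emeasure (Rn_measure n) (basic_set n L) < \<infinity>"
  shows "admissible_domain n (basic_set n L)"
  unfolding admissible_domain_def using assms sets_basic_set[OF assms(1)]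
  by (intro conjI exI[of _ "{L}"]) auto

definition box_conditions :: "nat \<Rightarrow> (nat \<Rightarrow> real) \<Rightarrow> (((nat \<Rightarrow> real) \<Rightarrow> real) \<times> bool) list" where
  "box_conditions n b = concat (map (\<lambda>i. [(\<lambda>x. x i, False), (\<lambda>x. b i - x i, False)]) [0..<n])"

lemma set_box_conditions:
  "set (box_conditions n b) = (\<Union>i<n. {(\<lambda>x. x i, False), (\<lambda>x. b i - x i, False)})"
  by (auto simp: box_conditions_def)

lemma basic_set_box: "basic_set n (box_conditions n b) = PiE {..<n} (\<lambda>i. {0..b i})"
proof (rule set_eqI)
  fix x
  show "x \<in> basic_set n (box_conditions n b) \<longleftrightarrow> x \<in> PiE {..<n} (\<lambda>i. {0..b i})"
    unfolding basic_set_def set_box_conditions Rn_measure_def space_PiM PiE_iff by auto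
qed

lemma emeasure_box:
  assumes "\<And>i. i < n \<Longrightarrow> b i \<ge> 0"
  shows "emeasure (Rn_measure n) (PiE {..<n} (\<lambda>i. {0..b i})) = ennreal (\<Prod>i<n. b i)"
proof -
  interpret finite_product_sigma_finite "\<lambda>_. lborel" "{..<n}"
    by standard simp
  have "emeasure (Rn_measure n) (PiE {..<n} (\<lambda>i. {0..b i}))
      = (\<Prod>i<n. emeasure lborel {0..b i})"
    unfolding Rn_measure_def by (rule measure_times) simp
  also have "\<dots> = (\<Prod>i<n. ennreal (b i))" using assms by (intro prod.cong) auto
  also have "\<dots> = ennreal (\<Prod>i<n. b i)" by (rule prod_ennreal) (simp add: assms)
  finally show ?thesis .
qed

lemma admissible_box:
  assumes "\<And>i. i < n \<Longrightarrow> algebraic (b i) \<and> b i \<ge> 0"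
  shows "admissible_domain n (basic_set n (box_conditions n b))"
    and "measure (Rn_measure n) (basic_set n (box_conditions n b)) = (\<Prod>i<n. b i)"
proof -
  have volume: "emeasure (Rn_measure n) (basic_set n (box_conditions n b)) = ennreal (\<Prod>i<n. b i)"
    using emeasure_box[of n b] assms by (simp add: basic_set_box)
  show "admissible_domain n (basic_set n (box_conditions n b))"
  proof (rule admissible_basic_set)
    show "\<forall>(P, _) \<in> set (box_conditions n b). alg_poly_fun n P"
      unfolding set_box_conditions
      using assms by (auto intro: alg_poly_coordinate alg_poly_const_minus_coordinate)
    show "emeasure (Rn_measure n) (basic_set n (box_conditions n b)) < \<infinity>"
      using volume by simp
  qed
  show "measure (Rn_measure n) (basic_set n (box_conditions n b)) = (\<Prod>i<n. b i)"
    using volume prod_nonneg[of "{..<n}" b] assms by (simp add: measure_def)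
qed

text \<open>The closed unit ball is cut out by 1 - (x_0^2 + \<dots> + x_{n-1}^2) \<ge> 0; as a set it is
  the Euclidean ball used by the library's ball-volume computation.\<close>

definition unit_ball_conditions :: "nat \<Rightarrow> (((nat \<Rightarrow> real) \<Rightarrow> real) \<times> bool) list" where
  "unit_ball_conditions n = [(\<lambda>x. 1 - (\<Sum>i<n. x i ^ 2), False)]"

lemma basic_set_unit_ball:
  "basic_set n (unit_ball_conditions n) =
     {f. sqrt (\<Sum>i\<in>{..<n}. (f i)\<^sup>2) \<le> 1} \<inter> space (Pi\<^sub>M {..<n} (\<lambda>_. lborel))"
  by (auto simp: basic_set_def unit_ball_conditions_def Rn_measure_def)

lemma admissible_unit_ball:
  shows "admissible_domain n (basic_set n (unit_ball_conditions n))"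
    and "measure (Rn_measure n) (basic_set n (unit_ball_conditions n)) = unit_ball_vol n"
proof -
  have volume: "emeasure (Rn_measure n) (basic_set n (unit_ball_conditions n)) = ennreal (unit_ball_vol n)"
    using emeasure_cball_aux[of "{..<n}" 1] by (simp add: basic_set_unit_ball Rn_measure_def)
  show "admissible_domain n (basic_set n (unit_ball_conditions n))"
  proof (rule admissible_basic_set)
    show "\<forall>(P, _) \<in> set (unit_ball_conditions n). alg_poly_fun n P"
      by (simp add: unit_ball_conditions_def alg_poly_ball)
    show "emeasure (Rn_measure n) (basic_set n (unit_ball_conditions n)) < \<infinity>"
      using volume by simp
  qed
  show "measure (Rn_measure n) (basic_set n (unit_ball_conditions n)) = unit_ball_vol n"
    using volume by (simp add: measure_def)
qed

lemma period_degree_le: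
  assumes "n \<ge> 1" "period_in_dim n p"
  shows "period_degree p \<le> enat n"
proof (cases "p = 0")
  case False
  have "real_period p" unfolding real_period_def using assms by blast
  moreover have "(LEAST m. m \<ge> 1 \<and> period_in_dim m p) \<le> n"
    by (rule Least_le) (use assms in simp)
  ultimately show ?thesis using False by (simp add: period_degree_def)
qed (simp add: period_degree_def)

text \<open>If e + pi is algebraic, then e = area ([0, e + pi] \<times> [0, 1]) - area (unit disk).\<close>

lemma exp_1_period_in_dim_2:
  assumes "algebraic (exp 1 + pi)"
  shows "period_in_dim 2 (exp 1)"
proof -
  define b :: "nat \<Rightarrow> real" where "b i = (if i = 0 then exp 1 + pi else 1)" for i
  have "exp 1 + pi \<ge> 0" using pi_gt_zero exp_gt_zero[of 1] by linarith
  then have sides: "algebraic (b i) \<and> b i \<ge> 0" if "i < 2" for i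
    using assms by (simp add: b_def algebraic_one)
  have rectangle: "measure (Rn_measure 2) (basic_set 2 (box_conditions 2 b)) = exp 1 + pi"
    using admissible_box(2)[of 2 b, OF sides] by (simp add: b_def numeral_2_eq_2)
  have disk: "measure (Rn_measure 2) (basic_set 2 (unit_ball_conditions 2)) = pi"
    using admissible_unit_ball(2)[of 2] unit_ball_vol_even[of 1] by simp
  show ?thesis unfolding period_in_dim_def
  proof (intro exI conjI)
    show "admissible_domain 2 (basic_set 2 (box_conditions 2 b))"
      by (rule admissible_box(1)[of 2 b, OF sides])
    show "admissible_domain 2 (basic_set 2 (unit_ball_conditions 2))"
      by (rule admissible_unit_ball(1))
    show "exp 1 = measure (Rn_measure 2) (basic_set 2 (box_conditions 2 b))
        - measure (Rn_measure 2) (basic_set 2 (unit_ball_conditions 2))"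
      by (simp add: rectangle disk)
  qed
qed

theorem corollary5p4:
  assumes "period_degree (exp 1) \<ge> 3"
  shows "\<not> algebraic (exp 1 + pi)"
proof
  assume "algebraic (exp 1 + pi)"
  then have "period_degree (exp 1) \<le> enat 2"
    by (intro period_degree_le exp_1_period_in_dim_2) simp_all
  also have "enat 2 < 3" by (simp add: numeral_eq_enat)
  finally have "period_degree (exp 1) < 3" .
  with leD[OF assms] show False by contradiction
qed

end
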